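(* Fix integers $K,M\ge1$, $L\ge2$, $N_r\ge1$, and constants $T_{s,k}>0$, $E_{p,k}\ge0$, $E_k>0$, $T_c>0$, $X_k(m)>0$, $\mu_{\ell,m}\in\mathbb{R}$, $\sigma_m^2>0$, $\sigma_{s,k}^2\ge0$, $\sigma_r^2\ge0$, $N_0>0$, and $\mathbf h_{k,m}\in\mathbb{C}^{N_r}$. Consider the problem $\mathcal P_4$: maximize $\alpha$ over variables $\alpha\in\mathbb R$, $P_{s,k}>0$, $c_{k,m}\in\mathbb R$ ($c_{k,m}\ge 0$), $\mathbf f_m\in\mathbb C^{N_r}$ (viewed as a vector of real and imaginary parts), $u_{k,m}>0$, $v_{\ell,\ell',m}>0$, subject to $$P_{s,k}T_{s,k}+E_{p,k}+T_c\sum_{m=1}^M u_{k,m}X_k(m)-E_k\le0\quad(1\le k\le K),$$ $$\alpha-\sum_{m=1}^M v_{\ell,\ell',m}\le0\quad(1\le\ell\ne\ell'\le L),$$ $$\frac{c_{k,m}^2}{u_{k,m}}-R_{k,m}(\mathbf f_m)\le0\quad(\forall k,m),$$ $$Z_m(\{P_{s,k}\},\{c_{k,m}\},\mathbf f_m)-Q_{\ell,\ell',m}(\{c_{k,m}\},v_{\ell,\ell',m})\le0\quad(\forall \ell\ne\ell',m),$$ where $R_{k,m}(\mathbf f_m)=\mathbf h_{k,m}^H\mathbf f_m\mathbf f_m^H\mathbf h_{k,m}$, $$Z_m=\sigma_m^2\Big(\sum_{k=1}^K c_{k,m}\Big)^2+\sum_{k=1}^K c_{k,m}^2\Big(\sigma_{s,k}^2+\frac{\sigma_r^2}{P_{s,k}}\Big)+N_0\mathbf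 f_m^H\mathbf f_m,\qquad Q_{\ell,\ell',m}=\frac{(\mu_{\ell,m}-\mu_{\ell',m})^2}{v_{\ell,\ell',m}}\Big(\sum_{k=1}^K c_{k,m}\Big)^2.$$ Then $\mathcal P_4$ is a d.c. problem.
   Context: A d.c. (difference-of-convex) problem is an optimization problem whose objective function and all constraint functions can each be written as the difference of two convex functions on the (convex) domain of the variables. Here the domain is $P_{s,k}>0$, $u_{k,m}>0$, $v_{\ell,\ell',m}>0$, $c_{k,m}$ real, and $\mathbf f_m\in\mathbb C^{N_r}\cong\mathbb R^{2N_r}$. *)

theory Defs
  imports "HOL-Analysis.Analysis"
begin

definition dc_on :: "'a::real_vector set \<Rightarrow> ('a \<Rightarrow> real) \<Rightarrow> bool" where
  "dc_on S F \<longleftrightarrow> (\<exists>g h. convex_on S g \<and> convex_on S h \<and> (\<forall>x\<in>S. F x = g x - h x))"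

definition dc_problem :: "'a::real_vector set \<Rightarrow> ('a \<Rightarrow> real) \<Rightarrow> ('a \<Rightarrow> real) set \<Rightarrow> bool" where
  "dc_problem S obj C \<longleftrightarrow> convex S \<and> dc_on S obj \<and> (\<forall>F\<in>C. dc_on S F)"

text \<open>Variables (alpha, P, c, f, u, v); c\$m\$k, f\$m\$i, u\$m\$k, v\$l\$l'\$m.\<close>
type_synonym ('k,'m,'l,'n) P4var =
  "real \<times> (real^'k) \<times> (real^'k^'m) \<times> (complex^'n^'m) \<times> (real^'k^'m) \<times> (real^'m^'l^'l)"

definition P4_domain :: "('k::finite,'m::finite,'l::finite,'n::finite) P4var set" where
  "P4_domain = {(\<alpha>,P,c,f,u,v). (\<forall>k. P$k > 0) \<and> (\<forall>k m. u$m$k > 0) \<and> (\<forall>l l' m. v$l$l'$m > 0)}"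

definition P4_obj :: "('k::finite,'m::finite,'l::finite,'n::finite) P4var \<Rightarrow> real" where
  "P4_obj = (\<lambda>(\<alpha>,P,c,f,u,v). \<alpha>)"

definition R_fun :: "(complex^'n::finite) \<Rightarrow> (complex^'n) \<Rightarrow> real" where
  "R_fun h fm = Re ((\<Sum>i\<in>UNIV. cnj (h$i) * fm$i) * (\<Sum>i\<in>UNIV. cnj (fm$i) * h$i))"

definition P4_constraints ::
  "('k::finite \<Rightarrow> real) \<Rightarrow> ('k \<Rightarrow> real) \<Rightarrow> ('k \<Rightarrow> real) \<Rightarrow> real \<Rightarrow> ('k \<Rightarrow> 'm::finite \<Rightarrow> real)
   \<Rightarrow> ('l::finite \<Rightarrow> 'm \<Rightarrow> real) \<Rightarrow> ('m \<Rightarrow> real) \<Rightarrow> ('k \<Rightarrow> real) \<Rightarrow> real \<Rightarrow> real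
   \<Rightarrow> ('k \<Rightarrow> 'm \<Rightarrow> complex^'n::finite)
   \<Rightarrow> (('k,'m,'l,'n) P4var \<Rightarrow> real) set" where
  "P4_constraints Ts Ep E Tc X \<mu> \<sigma>m2 \<sigma>s2 \<sigma>r2 N0 h =
     (\<Union>k. {\<lambda>(\<alpha>,P,c,f,u,v). P$k * Ts k + Ep k + Tc * (\<Sum>m\<in>UNIV. u$m$k * X k m) - E k})
   \<union> (\<Union>l. \<Union>l'\<in>{l'. l' \<noteq> l}. {\<lambda>(\<alpha>,P,c,f,u,v). \<alpha> - (\<Sum>m\<in>UNIV. v$l$l'$m)})
   \<union> (\<Union>k. \<Union>m. {\<lambda>(\<alpha>,P,c,f,u,v). - (c$m$k)})
   \<union> (\<Union>k. \<Union>m. {\<lambda>(\<alpha>,P,c,f,u,v). (c$m$k)^2 / (u$m$k) - R_fun (h k m) (f$m)})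
   \<union> (\<Union>l. \<Union>l'\<in>{l'. l' \<noteq> l}. \<Union>m.
       {\<lambda>(\<alpha>,P,c,f,u,v).
          (\<sigma>m2 m * (\<Sum>k\<in>UNIV. c$m$k)^2
           + (\<Sum>k\<in>UNIV. (c$m$k)^2 * (\<sigma>s2 k + \<sigma>r2 / P$k))
           + N0 * Re (\<Sum>i\<in>UNIV. cnj (f$m$i) * f$m$i))
          - ((\<mu> l m - \<mu> l' m)^2 / (v$l$l'$m)) * (\<Sum>k\<in>UNIV. c$m$k)^2})"

end

theory Submission
  imports Defs
begin

text \<open>Every constraint function of the problem is, on the domain, a sum of affine functions,
  squares of affine functions and quadratic-over-linear terms \<open>a\<^sup>2/b\<close> with \<open>a\<close>, \<open>b\<close> affine and
  \<open>b > 0\<close>, minus another such sum. The quadratic-over-linear function \<open>(a, b) \<mapsto> a\<^sup>2/b\<close> is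
  jointly convex on \<open>b > 0\<close>, and convexity is preserved by precomposition with affine maps,
  by nonnegative scaling and by finite sums. Hence each constraint is a difference of two
  convex functions; the objective \<open>\<alpha>\<close> is linear and the
  domain, cut out by strict positivity of some coordinates, is convex.\<close>

definition affine_functional :: "('a::real_vector \<Rightarrow> real) \<Rightarrow> bool" where
  "affine_functional a \<longleftrightarrow> (\<forall>x y t. a ((1 - t) *\<^sub>R x + t *\<^sub>R y) = (1 - t) * a x + t * a y)"

lemma affine_functionalD:
  assumes "affine_functional a" "u + v = 1"
  shows "a (u *\<^sub>R x + v *\<^sub>R y) = u * a x + v * a y"
  using assms unfolding affine_functional_def by (metis add_diff_cancel_right')

lemma affine_functional_const: "affine_functional (\<lambda>x. c)"
  unfolding affine_functional_def by (simp flip: distrib_right)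

lemma convex_on_affine_functional:
  assumes "convex S" "affine_functional a"
  shows "convex_on S a"
  using assms unfolding convex_on_def by (simp add: affine_functionalD)

lemma convex_comb_quad_over_lin_le:
  fixes a1 a2 b1 b2 s t :: real
  assumes "b1 > 0" "b2 > 0" "s \<ge> 0" "t \<ge> 0" "s + t = 1"
  shows "(s * a1 + t * a2)\<^sup>2 / (s * b1 + t * b2) \<le> s * (a1\<^sup>2 / b1) + t * (a2\<^sup>2 / b2)"
proof -
  have b_pos: "s * b1 + t * b2 > 0"
    using assms by (smt (verit) mult_nonneg_nonneg mult_pos_pos)
  have "(s * b1 + t * b2) * (s * a1\<^sup>2 * b2 + t * a2\<^sup>2 * b1) - (s * a1 + t * a2)\<^sup>2 * (b1 * b2)
      = s * t * (a1 * b2 - a2 * b1)\<^sup>2"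
    using assms(5) by (simp add: power2_eq_square algebra_simps)
  moreover have "s * t * (a1 * b2 - a2 * b1)\<^sup>2 \<ge> 0"
    using assms by simp
  ultimately have "(s * a1 + t * a2)\<^sup>2 * (b1 * b2) \<le> (s * b1 + t * b2) * (s * a1\<^sup>2 * b2 + t * a2\<^sup>2 * b1)"
    by linarith
  moreover have "s * (a1\<^sup>2 / b1) + t * (a2\<^sup>2 / b2) = (s * a1\<^sup>2 * b2 + t * a2\<^sup>2 * b1) / (b1 * b2)"
    using assms by (simp add: field_simps)
  ultimately show ?thesis
    using b_pos assms by (simp add: divide_simps mult.commute mult.left_commute)
qed

lemma convex_on_quad_over_lin:
  assumes "convex S" "affine_functional a" "affine_functional b" "\<And>x. x \<in> S \<Longrightarrow> b x > 0"
  shows "convex_on S (\<lambda>x. (a x)\<^sup>2 / b x)"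
  unfolding convex_on_def
proof (intro conjI ballI allI impI \<open>convex S\<close>)
  fix x y and s t :: real
  assume "x \<in> S" "y \<in> S" "0 \<le> s" "0 \<le> t" "s + t = 1"
  then show "(a (s *\<^sub>R x + t *\<^sub>R y))\<^sup>2 / b (s *\<^sub>R x + t *\<^sub>R y) \<le> s * ((a x)\<^sup>2 / b x) + t * ((a y)\<^sup>2 / b y)"
    using convex_comb_quad_over_lin_le[of "b x" "b y" s t "a x" "a y"] assms
    by (simp add: affine_functionalD)
qed

lemma convex_on_power2_affine:
  assumes "convex S" "affine_functional a"
  shows "convex_on S (\<lambda>x. (a x)\<^sup>2)"
  using convex_on_quad_over_lin[OF assms affine_functional_const[of 1]] by simp

lemma convex_on_finite_sum:
  assumes "finite I" "convex S" "\<And>i. i \<in> I \<Longrightarrow> convex_on S (f i)"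
  shows "convex_on S (\<lambda>x. \<Sum>i\<in>I. f i x)"
  using assms by (induction I rule: finite_induct) (auto simp: convex_on_const)

lemma dc_onI:
  assumes "convex_on S g" "convex_on S h" "\<And>x. x \<in> S \<Longrightarrow> F x = g x - h x"
  shows "dc_on S F"
  unfolding dc_on_def using assms by blast

lemma dc_on_convex_on:
  assumes "convex_on S F"
  shows "dc_on S F"
  using assms convex_on_imp_convex[OF assms] by (intro dc_onI[where h = "\<lambda>x. 0"]) (auto simp: convex_on_const)

lemma convex_P4_domain: "convex (P4_domain :: ('k::finite,'m::finite,'l::finite,'n::finite) P4var set)"
proof -
  have "0 < s * a + t * b" if "0 < a" "0 < b" "0 \<le> s" "0 \<le> t" "s + t = 1" for a b s t :: real
    using that by (smt (verit) mult_nonneg_nonneg mult_pos_pos)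
  then show ?thesis
    unfolding convex_def P4_domain_def by auto
qed

lemma R_fun_eq_Re_Im:
  "R_fun h fm = (Re (\<Sum>i\<in>UNIV. cnj (h$i) * fm$i))\<^sup>2 + (Im (\<Sum>i\<in>UNIV. cnj (h$i) * fm$i))\<^sup>2"
proof -
  have "(\<Sum>i\<in>UNIV. cnj (fm$i) * h$i) = cnj (\<Sum>i\<in>UNIV. cnj (h$i) * fm$i)"
    by (simp add: mult.commute)
  then show ?thesis
    unfolding R_fun_def by (simp only: complex_mult_cnj Re_complex_of_real)
qed

lemma dc_on_quad_over_lin_minus_R:
  "dc_on (P4_domain :: ('k::finite,'m::finite,'l::finite,'n::finite) P4var set)
     (\<lambda>(\<alpha>,P,c,f,u,v). (c$m$k)\<^sup>2 / (u$m$k) - R_fun h (f$m))"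
proof -
  let ?D = "P4_domain :: ('k,'m,'l,'n) P4var set"
  let ?c = "\<lambda>(\<alpha>,P,c,f,u,v). c$m$k" and ?u = "\<lambda>(\<alpha>,P,c,f,u,v). u$m$k"
    and ?re = "\<lambda>(\<alpha>,P,c,f,u,v). Re (\<Sum>i\<in>UNIV. cnj (h$i) * f$m$i)"
    and ?im = "\<lambda>(\<alpha>,P,c,f,u,v). Im (\<Sum>i\<in>UNIV. cnj (h$i) * f$m$i)"
  have affine: "affine_functional ?c" "affine_functional ?u"
      "affine_functional ?re" "affine_functional ?im"
    unfolding affine_functional_def
    by (auto simp: split_beta algebra_simps sum.distrib sum_distrib_left sum_subtractf Re_sum Im_sum)
  have "convex_on ?D (\<lambda>x. (?c x)\<^sup>2 / ?u x)"
    using affine by (intro convex_on_quad_over_lin convex_P4_domain) (auto simp: P4_domain_def)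
  moreover have "convex_on ?D (\<lambda>x. (?re x)\<^sup>2 + (?im x)\<^sup>2)"
    using affine by (intro convex_on_add convex_on_power2_affine convex_P4_domain)
  ultimately show ?thesis
    by (rule dc_onI) (simp add: split_beta R_fun_eq_Re_Im)
qed

lemma dc_on_Z_minus_Q:
  assumes "\<sigma>m2 m \<ge> 0" "\<forall>k. \<sigma>s2 k \<ge> 0" "\<sigma>r2 \<ge> 0" "N0 \<ge> 0"
  shows "dc_on (P4_domain :: ('k::finite,'m::finite,'l::finite,'n::finite) P4var set)
     (\<lambda>(\<alpha>,P,c,f,u,v).
          (\<sigma>m2 m * (\<Sum>k\<in>UNIV. c$m$k)\<^sup>2
           + (\<Sum>k\<in>UNIV. (c$m$k)\<^sup>2 * (\<sigma>s2 k + \<sigma>r2 / P$k))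
           + N0 * Re (\<Sum>i\<in>UNIV. cnj (f$m$i) * f$m$i))
          - ((\<mu> l m - \<mu> l' m)\<^sup>2 / (v$l$l'$m)) * (\<Sum>k\<in>UNIV. c$m$k)\<^sup>2)"
proof -
  let ?D = "P4_domain :: ('k,'m,'l,'n) P4var set"
  let ?sc = "\<lambda>(\<alpha>,P,c,f,u,v). \<Sum>k\<in>UNIV. c$m$k" and ?v = "\<lambda>(\<alpha>,P,c,f,u,v). v$l$l'$m"
  let ?c = "\<lambda>k (\<alpha>,P,c,f,u,v). c$m$k" and ?P = "\<lambda>k (\<alpha>,P,c,f,u,v). P$k"
    and ?re = "\<lambda>i (\<alpha>,P,c,f,u,v). Re (f$m$i)" and ?im = "\<lambda>i (\<alpha>,P,c,f,u,v). Im (f$m$i)"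
  have affine: "affine_functional ?sc" "affine_functional ?v" "affine_functional (?c k)"
      "affine_functional (?P k)" "affine_functional (?re i)" "affine_functional (?im i)" for k i
    unfolding affine_functional_def
    by (auto simp: split_beta algebra_simps sum.distrib sum_distrib_left sum_subtractf)
  have "convex_on ?D (\<lambda>x. \<sigma>m2 m * (?sc x)\<^sup>2
       + (\<Sum>k\<in>UNIV. \<sigma>s2 k * (?c k x)\<^sup>2 + \<sigma>r2 * ((?c k x)\<^sup>2 / ?P k x))
       + N0 * (\<Sum>i\<in>UNIV. (?re i x)\<^sup>2 + (?im i x)\<^sup>2))"
    using assms affine
    by (intro convex_on_add convex_on_cmul convex_on_finite_sum convex_on_power2_affine
          convex_on_quad_over_lin finite convex_P4_domain)
      (auto simp: P4_domain_def)
  moreover have "convex_on ?D (\<lambda>x. (\<mu> l m - \<mu> l' m)\<^sup>2 * ((?sc x)\<^sup>2 / ?v x))"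
    using affine
    by (intro convex_on_cmul convex_on_quad_over_lin convex_P4_domain) (auto simp: P4_domain_def)
  ultimately show ?thesis
    by (rule dc_onI) (simp add: split_beta Re_sum power2_eq_square algebra_simps sum.distrib)
qed

theorem lemma3:
  fixes Ts Ep E :: "'k::finite \<Rightarrow> real" and Tc :: real and X :: "'k \<Rightarrow> 'm::finite \<Rightarrow> real"
    and \<mu> :: "'l::finite \<Rightarrow> 'm \<Rightarrow> real" and \<sigma>m2 :: "'m \<Rightarrow> real" and \<sigma>s2 :: "'k \<Rightarrow> real"
    and \<sigma>r2 N0 :: real and h :: "'k \<Rightarrow> 'm \<Rightarrow> complex^'n::finite"
  assumes "CARD('l) \<ge> 2"
    and "\<forall>k. Ts k > 0" and "\<forall>k. Ep k \<ge> 0" and "\<forall>k. E k > 0" and "Tc > 0"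
    and "\<forall>k m. X k m > 0" and "\<forall>m. \<sigma>m2 m > 0" and "\<forall>k. \<sigma>s2 k \<ge> 0"
    and "\<sigma>r2 \<ge> 0" and "N0 > 0"
  shows "dc_problem (P4_domain :: ('k,'m,'l,'n) P4var set) P4_obj
           (P4_constraints Ts Ep E Tc X \<mu> \<sigma>m2 \<sigma>s2 \<sigma>r2 N0 h)"
proof -
  let ?D = "P4_domain :: ('k,'m,'l,'n) P4var set"
  have dc_affine: "dc_on ?D F" if "affine_functional F" for F
    using that by (intro dc_on_convex_on convex_on_affine_functional convex_P4_domain)
  note affine_simps = affine_functional_def split_beta algebra_simps
    sum.distrib sum_distrib_left sum_subtractf
  have "dc_on ?D P4_obj"
    by (rule dc_affine) (simp add: affine_simps P4_obj_def)
  moreover have "\<forall>F \<in> P4_constraints Ts Ep E Tc X \<mu> \<sigma>m2 \<sigma>s2 \<sigma>r2 N0 h. dc_on ?D F"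
    unfolding P4_constraints_def
    apply (intro ballI, elim UnE UN_E singletonE; hypsubst)
    subgoal by (rule dc_affine) (auto simp: affine_simps)
    subgoal by (rule dc_affine) (auto simp: affine_simps)
    subgoal by (rule dc_affine) (auto simp: affine_simps)
    subgoal by (rule dc_on_quad_over_lin_minus_R)
    subgoal using assms(7-10) by (intro dc_on_Z_minus_Q) (auto simp: less_imp_le)
    done
  ultimately show ?thesis
    unfolding dc_problem_def using convex_P4_domain by blast
qed

end
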